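(* Assume (H1), (H2). Fix $\lambda>f'(0)$ and let $s_*$ be a $\lambda$-conjugate point. Let $\mathcal W$ be a Lagrangian plane transverse to $\mathbb E^u_-(s_*,\lambda)$ and, for $s$ near $s_*$, let $A(s):\mathbb E^u_-(s_*,\lambda)\to\mathcal W$ be the linear map whose graph is $\mathbb E^u_-(s,\lambda)$. If $v\in\mathbb E^u_-(s_*,\lambda)\cap\ell_*^{sand}$ and $p(\cdot,\lambda)$ is the solution of $q'=B(x,\lambda)q$ decaying as $x\to-\infty$ with $p(s_*,\lambda)=v=(p_1,p_2,p_3,p_4)(s_*,\lambda)$, then $$Q^{(1)}(v):=\frac{d}{ds}\omega(v,A(s)v)\Big|_{s=s_*}=\big(p_2(s_*;\lambda)\big)^2.$$
   Context: Fix real $\nu,\mu$ and $f(u)=\nu u^2-u^3-\mu u$. (H1): $\varphi$ is a smooth stationary solution of $u_t=-(1+\partial_x^2)^2u+f(u)$ with $\varphi\to0$ at $\pm\infty$. (H2): $f'(0)<0$. $B(x,\lambda)=\begin{pmatrix}0&0&0&1\\0&0&1&-2\\-\lambda-1+f'(\varphi(x))&0&0&0\\0&1&0&0\end{pmatrix}$; $\omega(u,v)=\langle u,Jv\rangle$, $J=\begin{pmatrix}0&I_2\\-I_2&0\end{pmatrix}$. $\mathbb E^u_-(x,\lambda)$ is the set of values $q(x)$ of solutions of $q'=B(y,\lambda)q$ with $q(y)\to0$ as $y\to-\infty$ (a 2-dimensional Lagrangian plane). $\ell_*^{sand}=\{q\in\mathbb R^4:q_1=q_4=0\}$; $s$ is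 a $\lambda$-conjugate point if $\mathbb E^u_-(s,\lambda)\cap\ell_*^{sand}\ne\{0\}$. For Lagrangian $\ell_0$ and $\mathcal W$ transverse, the graph map of a nearby Lagrangian $\ell$ is the unique linear $A:\ell_0\to\mathcal W$ with $\ell=\{v+Av:v\in\ell_0\}$. *)

theory Defs
  imports "HOL-Analysis.Analysis"
begin

definition fnl :: "real \<Rightarrow> real \<Rightarrow> real \<Rightarrow> real" where
  "fnl nu mu u = nu * u^2 - u^3 - mu * u"

definition fnl' :: "real \<Rightarrow> real \<Rightarrow> real \<Rightarrow> real" where
  "fnl' nu mu u = 2 * nu * u - 3 * u^2 - mu"

definition smooth_fun :: "(real \<Rightarrow> real) \<Rightarrow> bool" where
  "smooth_fun g \<longleftrightarrow> (\<forall>n x. ((deriv ^^ n) g) differentiable (at x))"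

text \<open>(H1): phi is a smooth stationary solution of
  u_t = -(1+d^2)^2 u + f(u), decaying at both infinities.\<close>
definition H1 :: "real \<Rightarrow> real \<Rightarrow> (real \<Rightarrow> real) \<Rightarrow> bool" where
  "H1 nu mu phi \<longleftrightarrow> smooth_fun phi \<and>
     (\<forall>x. - ((deriv ^^ 4) phi x + 2 * (deriv ^^ 2) phi x + phi x) + fnl nu mu (phi x) = 0) \<and>
     (phi \<longlongrightarrow> 0) at_top \<and> (phi \<longlongrightarrow> 0) at_bot"

definition H2 :: "real \<Rightarrow> real \<Rightarrow> bool" where
  "H2 nu mu \<longleftrightarrow> fnl' nu mu 0 < 0"

definition Bmat :: "real \<Rightarrow> real \<Rightarrow> (real \<Rightarrow> real) \<Rightarrow> real \<Rightarrow> real \<Rightarrow> real^4^4" where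
  "Bmat nu mu phi x lam = vector [
      vector [0, 0, 0, 1],
      vector [0, 0, 1, -2],
      vector [- lam - 1 + fnl' nu mu (phi x), 0, 0, 0],
      vector [0, 1, 0, 0]]"

definition is_sol :: "real \<Rightarrow> real \<Rightarrow> (real \<Rightarrow> real) \<Rightarrow> real \<Rightarrow> (real \<Rightarrow> real^4) \<Rightarrow> bool" where
  "is_sol nu mu phi lam q \<longleftrightarrow>
     (\<forall>y. (q has_vector_derivative (Bmat nu mu phi y lam *v q y)) (at y))"

definition Eu :: "real \<Rightarrow> real \<Rightarrow> (real \<Rightarrow> real) \<Rightarrow> real \<Rightarrow> real \<Rightarrow> (real^4) set" where
  "Eu nu mu phi x lam = {q x | q. is_sol nu mu phi lam q \<and> (q \<longlongrightarrow> 0) at_bot}"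

definition Jmat :: "real^4^4" where
  "Jmat = vector [
      vector [0, 0, 1, 0],
      vector [0, 0, 0, 1],
      vector [-1, 0, 0, 0],
      vector [0, -1, 0, 0]]"

definition omega :: "real^4 \<Rightarrow> real^4 \<Rightarrow> real" where
  "omega u v = u \<bullet> (Jmat *v v)"

definition lagrangian :: "(real^4) set \<Rightarrow> bool" where
  "lagrangian L \<longleftrightarrow> subspace L \<and> dim L = 2 \<and> (\<forall>u\<in>L. \<forall>v\<in>L. omega u v = 0)"

definition transverse :: "(real^4) set \<Rightarrow> (real^4) set \<Rightarrow> bool" where
  "transverse U V \<longleftrightarrow> {u + v | u v. u \<in> U \<and> v \<in> V} = UNIV \<and> U \<inter> V = {0}"

definition ell_sand :: "(real^4) set" where
  "ell_sand = {q. q $ 1 = 0 \<and> q $ 4 = 0}"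

definition conjugate_point :: "real \<Rightarrow> real \<Rightarrow> (real \<Rightarrow> real) \<Rightarrow> real \<Rightarrow> real \<Rightarrow> bool" where
  "conjugate_point nu mu phi lam s \<longleftrightarrow> Eu nu mu phi s lam \<inter> ell_sand \<noteq> {0}"

definition graph_map :: "(real^4) set \<Rightarrow> (real^4) set \<Rightarrow> (real^4) set \<Rightarrow> (real^4 \<Rightarrow> real^4) \<Rightarrow> bool" where
  "graph_map l0 W l A \<longleftrightarrow> linear A \<and> (\<forall>v\<in>l0. A v \<in> W) \<and> l = (\<lambda>v. v + A v) ` l0"

end

theory Submission
  imports Defs
begin

text \<open>The form omega is a first integral of q' = B q (J B is symmetric), so Eu is isotropic.
  Complete v to a basis v, u of Eu(s0) and take coordinate functionals f, g on it that vanish on W.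
  Near s0 the graph of A s is spanned by p s and r s, where r is the decaying solution through u,
  and Cramer's rule writes omega(v, A s v) as a quotient whose numerator vanishes and whose
  denominator equals 1 at s0. Its derivative is therefore omega(v, B v), which is (v_2)^2
  because v_1 = v_4 = 0.\<close>

lemma vector4_nth [simp]:
  "(vector [a, b, c, d] :: 'a::zero^4) $ 1 = a" "(vector [a, b, c, d] :: 'a^4) $ 2 = b"
  "(vector [a, b, c, d] :: 'a^4) $ 3 = c" "(vector [a, b, c, d] :: 'a^4) $ 4 = d"
  unfolding vector_def by simp_all

lemma Bmat_mult_vec:
  "Bmat nu mu phi x lam *v q =
     vector [q $ 4, q $ 3 - 2 * q $ 4, (- lam - 1 + fnl' nu mu (phi x)) * q $ 1, q $ 2]"
  by (simp add: vec_eq_iff forall_4 matrix_vector_mult_def sum_4 Bmat_def)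

lemma omega_expand: "omega a b = a $ 1 * b $ 3 + a $ 2 * b $ 4 - a $ 3 * b $ 1 - a $ 4 * b $ 2"
  by (simp add: omega_def Jmat_def inner_vec_def sum_4 matrix_vector_mult_def)

lemma omega_self [simp]: "omega v v = 0"
  by (simp add: omega_expand)

lemma omega_add_right: "omega v (x + y) = omega v x + omega v y"
  and omega_scaleR_right: "omega v (c *\<^sub>R x) = c * omega v x"
  by (simp_all add: omega_expand algebra_simps)

lemma linear_omega: "linear (omega v)"
  by (rule linearI) (simp_all add: omega_add_right omega_scaleR_right)

lemma omega_Bmat_ell_sand:
  assumes "v \<in> ell_sand"
  shows "omega v (Bmat nu mu phi x lam *v v) = (v $ 2)\<^sup>2"
  using assms by (simp add: ell_sand_def omega_expand Bmat_mult_vec power2_eq_square)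

lemma is_sol_linear_deriv:
  assumes "is_sol nu mu phi lam q" and "linear h"
  shows "((\<lambda>s. h (q s)) has_real_derivative h (Bmat nu mu phi t lam *v q t)) (at t)"
  using bounded_linear.has_vector_derivative[OF _ assms(1)[unfolded is_sol_def, rule_format]]
    assms(2) linear_conv_bounded_linear
  unfolding has_real_derivative_iff_has_vector_derivative by blast

lemma omega_is_sol_deriv:
  assumes "is_sol nu mu phi lam q1" and "is_sol nu mu phi lam q2"
  shows "((\<lambda>t. omega (q1 t) (q2 t)) has_real_derivative 0) (at t)"
proof -
  note d1 = is_sol_linear_deriv[OF assms(1) bounded_linear_vec_nth[THEN bounded_linear.linear]]
    and d2 = is_sol_linear_deriv[OF assms(2) bounded_linear_vec_nth[THEN bounded_linear.linear]]
  have "((\<lambda>t. q1 t $ 1 * q2 t $ 3 + q1 t $ 2 * q2 t $ 4 - q1 t $ 3 * q2 t $ 1 - q1 t $ 4 * q2 t $ 2)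
          has_real_derivative 0) (at t)"
    by (rule derivative_eq_intros d1 d2 refl)+ (simp add: Bmat_mult_vec algebra_simps)
  then show ?thesis
    by (simp add: omega_expand)
qed

lemma omega_decaying_sols_eq_0:
  assumes "is_sol nu mu phi lam q1" and "is_sol nu mu phi lam q2"
    and "(q1 \<longlongrightarrow> 0) at_bot" and "(q2 \<longlongrightarrow> 0) at_bot"
  shows "omega (q1 y) (q2 y) = 0"
proof -
  let ?h = "\<lambda>t. omega (q1 t) (q2 t)"
  have "?h = (\<lambda>t. ?h y)"
    using DERIV_isconst_all omega_is_sol_deriv[OF assms(1,2)] by blast
  moreover have "(?h \<longlongrightarrow> omega 0 0) at_bot"
    unfolding omega_expand by (intro tendsto_intros assms(3,4))
  ultimately show ?thesis
    by (metis omega_self tendsto_const tendsto_unique trivial_limit_at_bot_linorder)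
qed

lemma Eu_subspace: "subspace (Eu nu mu phi x lam)"
  unfolding subspace_def
proof (intro conjI ballI allI)
  have "is_sol nu mu phi lam (\<lambda>_. 0)"
    by (simp add: is_sol_def Bmat_mult_vec)
  then show "0 \<in> Eu nu mu phi x lam"
    unfolding Eu_def by (intro CollectI exI[of _ "\<lambda>_. 0"]) simp
next
  fix a b assume "a \<in> Eu nu mu phi x lam" "b \<in> Eu nu mu phi x lam"
  then obtain qa qb where qa: "a = qa x" "is_sol nu mu phi lam qa" "(qa \<longlongrightarrow> 0) at_bot"
    and qb: "b = qb x" "is_sol nu mu phi lam qb" "(qb \<longlongrightarrow> 0) at_bot"
    unfolding Eu_def by blast
  have "is_sol nu mu phi lam (\<lambda>t. qa t + qb t)"
    using qa(2) qb(2) unfolding is_sol_def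
    by (metis (no_types) has_vector_derivative_add matrix_vector_right_distrib)
  moreover have "((\<lambda>t. qa t + qb t) \<longlongrightarrow> 0) at_bot"
    using tendsto_add[OF qa(3) qb(3)] by simp
  ultimately show "a + b \<in> Eu nu mu phi x lam"
    unfolding Eu_def qa(1) qb(1) by (intro CollectI exI[of _ "\<lambda>t. qa t + qb t"]) simp
next
  fix c :: real and a assume "a \<in> Eu nu mu phi x lam"
  then obtain qa where qa: "a = qa x" "is_sol nu mu phi lam qa" "(qa \<longlongrightarrow> 0) at_bot"
    unfolding Eu_def by blast
  have "is_sol nu mu phi lam (\<lambda>t. c *\<^sub>R qa t)"
    using qa(2) bounded_linear.has_vector_derivative[OF bounded_linear_scaleR_right[of c]]
    unfolding is_sol_def by (metis (no_types) matrix_vector_mult_scaleR)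
  moreover have "((\<lambda>t. c *\<^sub>R qa t) \<longlongrightarrow> 0) at_bot"
    using tendsto_scaleR[OF tendsto_const qa(3), of c] by simp
  ultimately show "c *\<^sub>R a \<in> Eu nu mu phi x lam"
    unfolding Eu_def qa(1) by (intro CollectI exI[of _ "\<lambda>t. c *\<^sub>R qa t"]) simp
qed

lemma dim_complementary_subspaces:
  fixes U W :: "'a::euclidean_space set"
  assumes "subspace U" "subspace W"
    and "{u + w |u w. u \<in> U \<and> w \<in> W} = UNIV" "U \<inter> W = {0}"
  shows "dim U + dim W = DIM('a)"
  using dim_sums_Int[OF assms(1,2)] assms(3,4) by simp

lemma dim2_extend_basis:
  fixes v :: "'a::euclidean_space"
  assumes "dim U = 2" "v \<in> U" "v \<noteq> 0"
  obtains u where "u \<in> U" "u \<noteq> v" "independent {v, u}" "U \<subseteq> span {v, u}"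
proof -
  obtain B where B: "{v} \<subseteq> B" "B \<subseteq> U" "independent B" "U \<subseteq> span B"
    using maximal_independent_subset_extend[of "{v}" U] assms(2,3) by auto
  have "card B = 2"
    using basis_card_eq_dim[OF B(2,4,3)] assms(1) by simp
  with B(1) obtain u where "B = {v, u}" "u \<noteq> v"
    by (auto simp: card_2_iff)
  with B that show ?thesis by auto
qed

lemma complement_coordinate_functionals:
  fixes v u :: "'a::euclidean_space"
  assumes "subspace U" "subspace W"
    and sum: "{x + w |x w. x \<in> U \<and> w \<in> W} = UNIV" and int: "U \<inter> W = {0}"
    and vu: "v \<in> U" "u \<in> U" "u \<noteq> v" "independent {v, u}" "U \<subseteq> span {v, u}"
  obtains f g :: "'a \<Rightarrow> real"
  where "linear f" "linear g" "f v = 1" "f u = 0" "g v = 0" "g u = 1"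
    "\<And>w. w \<in> W \<Longrightarrow> f w = 0" "\<And>w. w \<in> W \<Longrightarrow> g w = 0"
proof -
  obtain BW where BW: "BW \<subseteq> W" "independent BW" "W \<subseteq> span BW" "card BW = dim W"
    by (rule basis_exists)
  define C where "C = insert v (insert u BW)"
  have "dim U = 2"
    using basis_card_eq_dim[of "{v, u}" U] vu by simp
  have span_C: "UNIV \<subseteq> span C"
  proof
    fix x :: 'a
    obtain y w where "x = y + w" "y \<in> U" "w \<in> W"
      using sum by blast
    moreover have "span {v, u} \<subseteq> span C" "span BW \<subseteq> span C"
      by (auto simp: C_def intro!: span_mono)
    ultimately have "y \<in> span C" "w \<in> span C"
      using vu(5) BW(3) by auto
    then show "x \<in> span C"
      using \<open>x = y + w\<close> by (simp add: span_add)
  qed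
  have "card C \<le> 2 + card BW"
    using finiteI_independent[OF BW(2)] by (simp add: C_def card_insert_if)
  then have "card C \<le> dim (UNIV :: 'a set)"
    using dim_complementary_subspaces[OF assms(1-4)] \<open>dim U = 2\<close> BW(4) by simp
  then have indep: "independent C"
    using card_le_dim_spanning[OF _ span_C] finiteI_independent[OF BW(2)] by (simp add: C_def)
  have "v \<noteq> 0" "u \<noteq> 0"
    using vu(4) by (metis dependent_zero insertCI)+
  then have notW: "v \<notin> W" "u \<notin> W"
    using vu(1,2) int by auto
  obtain f :: "'a \<Rightarrow> real" where f: "linear f" "\<forall>x\<in>C. f x = (if x = v then 1 else 0)"
    using linear_independent_extend[OF indep, of "\<lambda>x. if x = v then 1 else 0"] by blast
  obtain g :: "'a \<Rightarrow> real" where g: "linear g" "\<forall>x\<in>C. g x = (if x = u then 1 else 0)"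
    using linear_independent_extend[OF indep, of "\<lambda>x. if x = u then 1 else 0"] by blast
  have "f w = 0" "g w = 0" if "w \<in> W" for w
  proof -
    have "w \<in> span BW"
      using that BW(3) by blast
    moreover have "\<forall>b\<in>BW. f b = 0" "\<forall>b\<in>BW. g b = 0"
      using f(2) g(2) BW(1) notW by (auto simp: C_def)
    ultimately show "f w = 0" "g w = 0"
      using linear_eq_0_on_span f(1) g(1) by blast+
  qed
  with f g vu(3) show ?thesis
    by (intro that[of f g]) (auto simp: C_def)
qed

lemma graph_map_coordinates:
  assumes "graph_map l0 W l A" "l0 \<subseteq> span {v, u}" "x \<in> l"
    and "linear f" "linear g" "f v = 1" "f u = 0" "g v = 0" "g u = 1"
    and "\<And>w. w \<in> W \<Longrightarrow> f w = 0" "\<And>w. w \<in> W \<Longrightarrow> g w = 0"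
  shows "x = f x *\<^sub>R (v + A v) + g x *\<^sub>R (u + A u)"
proof -
  obtain y where y: "y \<in> l0" "x = y + A y" and "A y \<in> W" and "linear A"
    using assms(1,3) unfolding graph_map_def by blast
  obtain a where "y - a *\<^sub>R v \<in> span {u}"
    using assms(2) y(1) span_breakdown_eq by blast
  then obtain b where "y - a *\<^sub>R v = b *\<^sub>R u"
    by (auto simp: span_singleton)
  then have ab: "y = a *\<^sub>R v + b *\<^sub>R u"
    by (simp add: algebra_simps)
  have "f x = a" "g x = b"
    using assms(4-11) \<open>A y \<in> W\<close> by (simp_all add: y(2) ab linear_add linear_scale)
  moreover have "A y = a *\<^sub>R A v + b *\<^sub>R A u"
    using \<open>linear A\<close> by (simp add: ab linear_add linear_scale)
  ultimately show ?thesis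
    by (simp add: y(2) ab algebra_simps)
qed

lemma graph_map_omega_cramer:
  assumes "graph_map l0 W l A" "l0 \<subseteq> span {v, u}" "x \<in> l" "y \<in> l"
    and "linear f" "linear g" "f v = 1" "f u = 0" "g v = 0" "g u = 1"
    and "\<And>w. w \<in> W \<Longrightarrow> f w = 0" "\<And>w. w \<in> W \<Longrightarrow> g w = 0"
  shows "omega v (A v) * (f x * g y - f y * g x) = g y * omega v x - g x * omega v y"
proof -
  let ?c = "omega v (u + A u)"
  have "omega v z = f z * omega v (A v) + g z * ?c" if "z \<in> l" for z
    by (subst graph_map_coordinates[OF assms(1,2) that assms(5-12)])
      (simp_all add: omega_add_right omega_scaleR_right)
  then show ?thesis
    using assms(3,4) by (simp add: algebra_simps)
qed

lemma DERIV_eventually_quotient: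
  fixes X D N :: "real \<Rightarrow> real"
  assumes "eventually (\<lambda>s. X s * D s = N s) (nhds s0)"
    and D: "(D has_real_derivative D') (at s0)" and N: "(N has_real_derivative N') (at s0)"
    and "D s0 \<noteq> 0"
  shows "(X has_real_derivative (N' * D s0 - N s0 * D') / (D s0 * D s0)) (at s0)"
proof -
  have "eventually (\<lambda>s. D s \<noteq> 0) (nhds s0)"
    using tendsto_imp_eventually_ne[OF DERIV_isCont[OF D, unfolded isCont_def] assms(4)] assms(4)
    by (simp add: eventually_nhds_conv_at)
  with assms(1) have "eventually (\<lambda>s. X s = N s / D s) (nhds s0)"
    by eventually_elim (simp add: field_simps)
  from DERIV_cong_ev[OF refl this refl] show ?thesis
    using DERIV_divide[OF N D assms(4)] by blast
qed

lemma graph_map_omega_deriv: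
  fixes f g :: "real^4 \<Rightarrow> real"
  assumes graph: "eventually (\<lambda>s. graph_map l0 W (Eu nu mu phi s lam) (A s)) (nhds s0)"
    and span: "l0 \<subseteq> span {v, u}"
    and f: "linear f" "f v = 1" "f u = 0" "\<And>w. w \<in> W \<Longrightarrow> f w = 0"
    and g: "linear g" "g v = 0" "g u = 1" "\<And>w. w \<in> W \<Longrightarrow> g w = 0"
    and p: "is_sol nu mu phi lam p" "(p \<longlongrightarrow> 0) at_bot" "p s0 = v"
    and r: "is_sol nu mu phi lam r" "(r \<longlongrightarrow> 0) at_bot" "r s0 = u"
  shows "((\<lambda>s. omega v (A s v)) has_real_derivative omega v (Bmat nu mu phi s0 lam *v v)) (at s0)"
proof -
  define D where "D = (\<lambda>s. f (p s) * g (r s) - f (r s) * g (p s))"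
  define N where "N = (\<lambda>s. g (r s) * omega v (p s) - g (p s) * omega v (r s))"
  note dp = is_sol_linear_deriv[OF p(1)] and dr = is_sol_linear_deriv[OF r(1)]
  have Eu: "p s \<in> Eu nu mu phi s lam" "r s \<in> Eu nu mu phi s lam" for s
    using p r unfolding Eu_def by blast+
  have "eventually (\<lambda>s. omega v (A s v) * D s = N s) (nhds s0)"
    using graph
  proof eventually_elim
    case (elim s)
    show ?case
      using graph_map_omega_cramer[OF elim span Eu f(1) g(1) f(2,3) g(2,3) f(4) g(4)]
      by (simp add: D_def N_def)
  qed
  moreover obtain D' where "(D has_real_derivative D') (at s0)"
    unfolding D_def
    using DERIV_diff[OF DERIV_mult[OF dp[OF f(1)] dr[OF g(1)]] DERIV_mult[OF dr[OF f(1)] dp[OF g(1)]]]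
    by blast
  moreover have "omega v u = 0"
    using omega_decaying_sols_eq_0[OF p(1) r(1) p(2) r(2), of s0] by (simp add: p(3) r(3))
  then have "(N has_real_derivative omega v (Bmat nu mu phi s0 lam *v v)) (at s0)"
    using DERIV_diff[OF DERIV_mult[OF dr[OF g(1)] dp[OF linear_omega[of v]]]
        DERIV_mult[OF dp[OF g(1)] dr[OF linear_omega[of v]]], of s0]
    by (simp add: N_def p(3) r(3) g(2,3))
  moreover have "D s0 = 1" "N s0 = 0"
    using \<open>omega v u = 0\<close> by (simp_all add: D_def N_def p(3) r(3) f(2,3) g(2,3))
  ultimately show ?thesis
    using DERIV_eventually_quotient[of "\<lambda>s. omega v (A s v)" D N s0] by simp
qed

theorem lemma3:
  fixes nu mu lam s0 :: real and phi :: "real \<Rightarrow> real"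
    and W :: "(real^4) set" and A :: "real \<Rightarrow> real^4 \<Rightarrow> real^4"
    and v :: "real^4" and p :: "real \<Rightarrow> real^4"
  assumes H1: "H1 nu mu phi" and H2: "H2 nu mu"
    and lam: "lam > fnl' nu mu 0"
    and conj: "conjugate_point nu mu phi lam s0"
    and W: "lagrangian W" and transv: "transverse (Eu nu mu phi s0 lam) W"
    and Agraph: "\<exists>\<delta>>0. \<forall>s. \<bar>s - s0\<bar> < \<delta> \<longrightarrow>
                    graph_map (Eu nu mu phi s0 lam) W (Eu nu mu phi s lam) (A s)"
    and v: "v \<in> Eu nu mu phi s0 lam \<inter> ell_sand"
    and psol: "is_sol nu mu phi lam p" and pdec: "(p \<longlongrightarrow> 0) at_bot"
    and pv: "p s0 = v"
  shows "((\<lambda>s. omega v (A s v)) has_real_derivative (p s0 $ 2)^2) (at s0)"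
proof (cases "v = 0")
  case True
  then show ?thesis
    using pv by (simp add: omega_expand)
next
  case False
  let ?l0 = "Eu nu mu phi s0 lam"
  have W2: "subspace W" "dim W = 2"
    using W by (simp_all add: lagrangian_def)
  have compl: "{x + w |x w. x \<in> ?l0 \<and> w \<in> W} = UNIV" "?l0 \<inter> W = {0}"
    using transv by (simp_all add: transverse_def)
  then have "dim ?l0 = 2"
    using dim_complementary_subspaces[OF Eu_subspace W2(1)] W2(2) by simp
  then obtain u where u: "u \<in> ?l0" "u \<noteq> v" "independent {v, u}" "?l0 \<subseteq> span {v, u}"
    using dim2_extend_basis v False by blast
  obtain f g :: "real^4 \<Rightarrow> real"
    where fg: "linear f" "linear g" "f v = 1" "f u = 0" "g v = 0" "g u = 1"
    "\<And>w. w \<in> W \<Longrightarrow> f w = 0" "\<And>w. w \<in> W \<Longrightarrow> g w = 0"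
    using complement_coordinate_functionals[OF Eu_subspace W2(1) compl] v u by blast
  obtain r where r: "is_sol nu mu phi lam r" "(r \<longlongrightarrow> 0) at_bot" "r s0 = u"
    using u(1) unfolding Eu_def by blast
  have "eventually (\<lambda>s. graph_map ?l0 W (Eu nu mu phi s lam) (A s)) (nhds s0)"
    using Agraph unfolding eventually_nhds_metric dist_real_def by blast
  from graph_map_omega_deriv[OF this u(4) fg(1,3,4,7) fg(2,5,6,8) psol pdec pv r]
  show ?thesis
    using omega_Bmat_ell_sand v pv by simp
qed

end
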